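(* Let $G$ be a finite group. Then $G$ has at least $d(|G|)$ cyclic subgroups, and $G$ has exactly $d(|G|)$ cyclic subgroups if and only if $G$ is cyclic.
   Context: For a positive integer $n$, $d(n)$ denotes the number of positive divisors of $n$. *)

theory Defs
  imports "HOL-Algebra.Elementary_Groups"
begin

definition num_divisors :: "nat \<Rightarrow> nat" where
  "num_divisors n = card {k. k dvd n}"

definition cyclic_subgroups :: "('a, 'b) monoid_scheme \<Rightarrow> 'a set set" where
  "cyclic_subgroups G = {H. \<exists>a \<in> carrier G. H = generate G {a}}"

end

theory Submission
  imports Defs "HOL-Algebra.Weak_Morphisms" "HOL-Algebra.Multiplicative_Group"
    "HOL-Algebra.Group_Action" "HOL-Number_Theory.Number_Theory"
begin

text \<open>
  Write \<open>L(e)\<close> for the set of solutions of \<open>x\<^sup>e = 1\<close> in \<open>G\<close> and \<open>n = |G|\<close>.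
  A cyclic subgroup is generated by exactly \<open>\<phi>\<close>(its order) of its elements, so the number of
  cyclic subgroups is \<open>\<Sum>\<^sub>x 1/\<phi>(ord x)\<close>.  Moebius inversion on the divisors of \<open>n\<close> gives
  nonnegative weights \<open>W\<close> with \<open>\<Sum>\<^bsub>d | e | n\<^esub> W(e) = 1/\<phi>(d)\<close>, which rewrite this count as
  \<open>\<Sum>\<^bsub>e | n\<^esub> W(e) |L(e)|\<close>, while \<open>d(n) = \<Sum>\<^bsub>e | n\<^esub> W(e) e\<close> (the same sum for the cyclic group).
  Frobenius' theorem (\<open>e\<close> divides \<open>|L(e)|\<close>) gives \<open>|L(e)| \<ge> e\<close> and hence the inequality.
  Equality forces \<open>|L(e)| = e\<close> whenever \<open>W(e) > 0\<close>, which fails only for odd \<open>e\<close> when \<open>n\<close> is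
  even; those cases follow from \<open>L(2e)\<close>, and \<open>|L(e)| = e\<close> for all \<open>e | n\<close> yields an element of
  order \<open>n\<close>.
\<close>

section \<open>Roots of unity and centralizers\<close>

definition roots_of_unity :: "('a, 'b) monoid_scheme \<Rightarrow> nat \<Rightarrow> 'a set" where
  "roots_of_unity G n = {x \<in> carrier G. x [^]\<^bsub>G\<^esub> n = \<one>\<^bsub>G\<^esub>}"

definition centralizer :: "('a, 'b) monoid_scheme \<Rightarrow> 'a \<Rightarrow> 'a set" where
  "centralizer G y = {g \<in> carrier G. g \<otimes>\<^bsub>G\<^esub> y = y \<otimes>\<^bsub>G\<^esub> g}"

context group
begin

lemma roots_of_unity_eq_ord_dvd: "roots_of_unity G n = {x \<in> carrier G. ord x dvd n}"
  using pow_eq_id by (auto simp: roots_of_unity_def)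

lemma one_in_roots_of_unity: "\<one> \<in> roots_of_unity G n"
  by (simp add: roots_of_unity_def)

lemma roots_of_unity_mono: "n dvd k \<Longrightarrow> roots_of_unity G n \<subseteq> roots_of_unity G k"
  by (auto simp: roots_of_unity_eq_ord_dvd intro: dvd_trans)

lemma finite_roots_of_unity: "finite (carrier G) \<Longrightarrow> finite (roots_of_unity G n)"
  by (simp add: roots_of_unity_def)

lemma roots_of_unity_gcd_order:
  "finite (carrier G) \<Longrightarrow> roots_of_unity G (gcd n (order G)) = roots_of_unity G n"
  using ord_dvd_group_order by (auto simp: roots_of_unity_eq_ord_dvd)

lemma roots_of_unity_subgroup:
  "subgroup H G \<Longrightarrow> roots_of_unity (G\<lparr>carrier := H\<rparr>) n = roots_of_unity G n \<inter> H"
  by (auto simp: roots_of_unity_def nat_pow_consistent[symmetric] dest: subgroup.mem_carrier)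

lemma pow_eq_if_cong:
  assumes "x \<in> carrier G" and "ord x dvd q" and "[a = b] (mod q)"
  shows "x [^] a = x [^] b"
proof -
  have "[int a = int b] (mod int (ord x))"
    using assms(2,3) cong_dvd_modulus_nat cong_int_iff by blast
  then have "int (ord x) dvd int b - int a"
    using cong_iff_dvd_diff cong_sym by blast
  then have "x [^] int a = x [^] int b"
    using int_pow_eq[OF assms(1)] by blast
  then show ?thesis
    by (simp add: int_pow_int)
qed

lemma eq_one_if_coprime_exponents:
  fixes m q :: nat
  assumes "x \<in> carrier G" "x [^] m = \<one>" "x [^] q = \<one>" "coprime m q"
  shows "x = \<one>"
proof -
  have "ord x dvd m" "ord x dvd q"
    using assms(1-3) pow_eq_id by auto
  then have "ord x = 1"
    using assms(4) coprime_common_divisor_nat by blast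
  then show ?thesis
    using ord_eq_1 assms(1) by simp
qed

lemma centralizer_eq_stabilizer:
  "centralizer G y = stabilizer G (\<lambda>g. \<lambda>h \<in> carrier G. g \<otimes> h \<otimes> inv g) y" if "y \<in> carrier G"
proof -
  have "g \<otimes> y \<otimes> inv g = y \<longleftrightarrow> g \<otimes> y = y \<otimes> g" if "g \<in> carrier G" for g
    using inv_solve_right[of y "g \<otimes> y" g] that \<open>y \<in> carrier G\<close> by auto
  then show ?thesis
    using that by (auto simp: centralizer_def stabilizer_def)
qed

lemma centralizer_subgroup: "y \<in> carrier G \<Longrightarrow> subgroup (centralizer G y) G"
  by (simp add: centralizer_eq_stabilizer group_action.stabilizer_subgroup[OF action_by_conjugation])

lemma centralizer_card_dvd_order:
  "y \<in> carrier G \<Longrightarrow> card (centralizer G y) dvd order G"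
  using lagrange[OF centralizer_subgroup] by (metis dvd_triv_right)

lemma centralizer_generate:
  assumes "y \<in> carrier G"
  shows "centralizer G y = {g \<in> carrier G. generate G {y} \<subseteq> centralizer G g}"
proof -
  have "generate G {y} \<subseteq> centralizer G g \<longleftrightarrow> y \<in> centralizer G g" if "g \<in> carrier G" for g
    using generate_subgroup_incl[OF _ centralizer_subgroup[OF that]] generate.incl[of y "{y}" G]
    by blast
  moreover have "g \<in> centralizer G y \<longleftrightarrow> g \<in> carrier G \<and> y \<in> centralizer G g" for g
    using assms by (auto simp: centralizer_def)
  ultimately show ?thesis
    by blast
qed

lemma centralizer_eq_if_generate_eq:
  "y \<in> carrier G \<Longrightarrow> z \<in> carrier G \<Longrightarrow> generate G {z} = generate G {y} \<Longrightarrow> centralizer G z = centralizer G y"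
  by (simp add: centralizer_generate)

end

section \<open>Transport along isomorphisms\<close>

lemma iso_pow_eq_one_iff:
  fixes n :: nat
  assumes "group G" "group H" "\<phi> \<in> iso G H" "x \<in> carrier G"
  shows "\<phi> x [^]\<^bsub>H\<^esub> n = \<one>\<^bsub>H\<^esub> \<longleftrightarrow> x [^]\<^bsub>G\<^esub> n = \<one>\<^bsub>G\<^esub>"
proof -
  interpret G: group G by (rule assms(1))
  interpret group_hom G H \<phi>
    using assms by (simp add: group_hom_def group_hom_axioms_def iso_imp_homomorphism)
  have homh: "\<phi> \<in> hom G H"
    using assms(3) by (simp add: iso_imp_homomorphism)
  have "inj_on \<phi> (carrier G)"
    using assms(3) by (simp add: iso_def bij_betw_def)
  moreover have "\<phi> x [^]\<^bsub>H\<^esub> n = \<phi> (x [^]\<^bsub>G\<^esub> n)"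
    using Group.hom_nat_pow[OF homh assms(4,1,2)] by (rule sym)
  ultimately show ?thesis
    using assms(4) hom_one by (metis G.nat_pow_closed G.one_closed inj_on_eq_iff)
qed

lemma iso_roots_of_unity_image:
  assumes "group G" "group H" "\<phi> \<in> iso G H"
  shows "\<phi> ` roots_of_unity G n = roots_of_unity H n"
proof -
  have surj: "\<phi> ` carrier G = carrier H"
    using assms(3) by (simp add: iso_def bij_betw_def)
  show ?thesis
  proof
    show "\<phi> ` roots_of_unity G n \<subseteq> roots_of_unity H n"
      using iso_pow_eq_one_iff[OF assms] surj by (auto simp: roots_of_unity_def)
  next
    show "roots_of_unity H n \<subseteq> \<phi> ` roots_of_unity G n"
    proof
      fix h assume h: "h \<in> roots_of_unity H n"
      then obtain x where "x \<in> carrier G" "h = \<phi> x"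
        using surj by (auto simp: roots_of_unity_def)
      then show "h \<in> \<phi> ` roots_of_unity G n"
        using h iso_pow_eq_one_iff[OF assms] by (auto simp: roots_of_unity_def)
    qed
  qed
qed

lemma iso_card_roots_of_unity:
  assumes "group G" "group H" "\<phi> \<in> iso G H"
  shows "card (roots_of_unity H n) = card (roots_of_unity G n)"
proof -
  have "inj_on \<phi> (carrier G)"
    using assms(3) by (simp add: iso_def bij_betw_def)
  then have "inj_on \<phi> (roots_of_unity G n)"
    by (rule inj_on_subset) (auto simp: roots_of_unity_def)
  then have "card (\<phi> ` roots_of_unity G n) = card (roots_of_unity G n)"
    by (rule card_image)
  then show ?thesis
    by (simp only: iso_roots_of_unity_image[OF assms])
qed

lemma ex_iso_nat_group:
  assumes "group G" "finite (carrier G)"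
  obtains H :: "nat monoid" and \<phi> where "group H" "finite (carrier H)" "order H = order G" "\<phi> \<in> iso G H"
proof -
  obtain f :: "'a \<Rightarrow> nat" where f: "inj_on f (carrier G)"
    using finite_imp_inj_to_nat_seg[OF assms(2)] by metis
  have "group (image_group f G)"
    using group.inj_imp_image_group_is_group[OF assms(1) f] .
  moreover have "finite (carrier (image_group f G))"
    using assms(2) by (simp add: image_group_carrier)
  moreover have "order (image_group f G) = order G"
    using f by (simp add: image_group_carrier order_def card_image)
  ultimately show thesis
    using that inj_imp_image_group_iso[OF f] by blast
qed

context group
begin

lemma iso_ord:
  assumes "group H" "\<phi> \<in> iso G H" "x \<in> carrier G"
  shows "group.ord H (\<phi> x) = ord x"
proof -
  interpret H: group H by (rule assms(1))
  have "\<phi> x \<in> carrier H"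
    using assms(2,3) by (auto simp: iso_def hom_def)
  moreover have "\<forall>n. \<phi> x [^]\<^bsub>H\<^esub> n = \<one>\<^bsub>H\<^esub> \<longleftrightarrow> ord x dvd n"
    using iso_pow_eq_one_iff[OF is_group assms] pow_eq_id[OF assms(3)] by simp
  ultimately show ?thesis
    using H.ord_unique by blast
qed

lemma iso_centralizer_image:
  assumes "group H" "\<phi> \<in> iso G H" "y \<in> carrier G"
  shows "\<phi> ` centralizer G y = centralizer H (\<phi> y)"
proof -
  have inj: "inj_on \<phi> (carrier G)" and surj: "\<phi> ` carrier G = carrier H"
    and mult: "\<And>a b. a \<in> carrier G \<Longrightarrow> b \<in> carrier G \<Longrightarrow> \<phi> (a \<otimes> b) = \<phi> a \<otimes>\<^bsub>H\<^esub> \<phi> b"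
    using assms(2) by (auto simp: iso_def bij_betw_def hom_def)
  have commute_iff: "g \<otimes> y = y \<otimes> g \<longleftrightarrow> \<phi> g \<otimes>\<^bsub>H\<^esub> \<phi> y = \<phi> y \<otimes>\<^bsub>H\<^esub> \<phi> g"
    if "g \<in> carrier G" for g
    using that assms(3) inj_on_eq_iff[OF inj] by (simp flip: mult)
  show ?thesis
  proof
    show "\<phi> ` centralizer G y \<subseteq> centralizer H (\<phi> y)"
      using commute_iff surj by (auto simp: centralizer_def)
  next
    show "centralizer H (\<phi> y) \<subseteq> \<phi> ` centralizer G y"
    proof
      fix h assume h: "h \<in> centralizer H (\<phi> y)"
      then obtain g where "g \<in> carrier G" "h = \<phi> g"
        using surj by (auto simp: centralizer_def)
      then show "h \<in> \<phi> ` centralizer G y"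
        using h commute_iff by (auto simp: centralizer_def)
    qed
  qed
qed

lemma conjugation_iso:
  assumes "g \<in> carrier G"
  shows "(\<lambda>h. g \<otimes> h \<otimes> inv g) \<in> iso G G"
proof (rule isoI)
  show "bij_betw (\<lambda>h. g \<otimes> h \<otimes> inv g) (carrier G) (carrier G)"
    using conjugation_is_bij[OF assms] by (simp add: bij_betw_restrict_eq)
  show "(\<lambda>h. g \<otimes> h \<otimes> inv g) \<in> hom G G"
  proof (rule homI)
    fix a b assume ab: "a \<in> carrier G" "b \<in> carrier G"
    have "g \<otimes> a \<otimes> inv g \<otimes> (g \<otimes> b \<otimes> inv g) = g \<otimes> a \<otimes> (inv g \<otimes> g) \<otimes> b \<otimes> inv g"
      using ab assms by (simp only: m_assoc m_closed inv_closed)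
    also have "\<dots> = g \<otimes> (a \<otimes> b) \<otimes> inv g"
      using ab assms by (simp add: m_assoc)
    finally show "g \<otimes> (a \<otimes> b) \<otimes> inv g = g \<otimes> a \<otimes> inv g \<otimes> (g \<otimes> b \<otimes> inv g)" ..
  qed (use assms in simp)
qed

lemma conjugation_card_roots_of_unity_centralizer:
  assumes "g \<in> carrier G" "y \<in> carrier G"
  shows "card (roots_of_unity G m \<inter> centralizer G (g \<otimes> y \<otimes> inv g))
       = card (roots_of_unity G m \<inter> centralizer G y)"
proof -
  let ?c = "\<lambda>h. g \<otimes> h \<otimes> inv g"
  have iso: "?c \<in> iso G G"
    using conjugation_iso[OF assms(1)] .
  then have inj: "inj_on ?c (carrier G)"
    by (simp add: iso_def bij_betw_def)
  have "?c ` (roots_of_unity G m \<inter> centralizer G y)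
      = ?c ` roots_of_unity G m \<inter> ?c ` centralizer G y"
    by (rule inj_on_image_Int[OF inj]) (auto simp: roots_of_unity_def centralizer_def)
  also have "\<dots> = roots_of_unity G m \<inter> centralizer G (?c y)"
    using iso_roots_of_unity_image[OF is_group is_group iso]
      iso_centralizer_image[OF is_group iso assms(2)] by simp
  finally have "?c ` (roots_of_unity G m \<inter> centralizer G y) = roots_of_unity G m \<inter> centralizer G (?c y)" .
  moreover have "inj_on ?c (roots_of_unity G m \<inter> centralizer G y)"
    using inj by (rule inj_on_subset) (auto simp: roots_of_unity_def)
  ultimately show ?thesis
    using card_image by fastforce
qed

end

section \<open>Generators of cyclic subgroups\<close>

context group
begin

lemma ord_eq_if_generate_eq:
  "y \<in> carrier G \<Longrightarrow> z \<in> carrier G \<Longrightarrow> generate G {z} = generate G {y} \<Longrightarrow> ord z = ord y"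
  by (simp add: generate_pow_card)

lemma generate_singleton_eq_powers:
  assumes "finite (carrier G)" "y \<in> carrier G"
  shows "generate G {y} = (\<lambda>k. y [^] k) ` {1..ord y}"
proof -
  have ord_pos: "ord y > 0"
    using ord_ge_1[OF assms] by simp
  have in_image: "y [^] k \<in> (\<lambda>k. y [^] k) ` {1..ord y}" for k :: nat
  proof -
    define k' where "k' = (if k mod ord y = 0 then ord y else k mod ord y)"
    have "k mod ord y < ord y"
      using ord_pos by simp
    then have "k' \<in> {1..ord y}"
      using ord_pos by (simp add: k'_def)
    moreover have "[k = k'] (mod ord y)"
      by (simp add: k'_def cong_def)
    then have "y [^] k = y [^] k'"
      using pow_eq_if_cong[OF assms(2) dvd_refl] by blast
    ultimately show ?thesis
      by (rule rev_image_eqI)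
  qed
  have "generate G {y} = range (\<lambda>k::nat. y [^] k)"
    using generate_pow_on_finite_carrier[OF assms] by blast
  moreover have "range (\<lambda>k::nat. y [^] k) \<subseteq> (\<lambda>k. y [^] k) ` {1..ord y}"
    by (rule image_subsetI) (rule in_image)
  ultimately show ?thesis
    by auto
qed

lemma generate_eq_if_ord_eq:
  assumes "finite (carrier G)" "y \<in> carrier G" "z \<in> generate G {y}" "ord z = ord y"
  shows "generate G {z} = generate G {y}"
proof -
  have sub: "subgroup (generate G {y}) G"
    using assms(2) generate_is_subgroup by simp
  then have "z \<in> carrier G"
    using assms(3) subgroup.subset by blast
  then have "card (generate G {z}) = card (generate G {y})"
    using generate_pow_card assms(2,4) by simp
  moreover have "generate G {z} \<subseteq> generate G {y}"
    using generate_subgroup_incl[OF _ sub] assms(3) by simp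
  moreover have "finite (generate G {y})"
    using assms(1) sub subgroup.subset finite_subset by blast
  ultimately show ?thesis
    by (simp add: card_subset_eq)
qed

lemma generators_eq_powers:
  assumes "finite (carrier G)" "y \<in> carrier G"
  shows "{z \<in> carrier G. generate G {z} = generate G {y}} = (\<lambda>k. y [^] k) ` totatives (ord y)"
proof (intro equalityI subsetI)
  fix z assume z: "z \<in> {z \<in> carrier G. generate G {z} = generate G {y}}"
  then have "z \<in> generate G {y}"
    using generate.incl[of z "{z}" G] by auto
  then obtain k where k: "k \<in> {1..ord y}" "z = y [^] k"
    using generate_singleton_eq_powers[OF assms] by auto
  have "ord (y [^] k) = ord y"
    using z k ord_eq_if_generate_eq[OF assms(2)] by auto
  then have "coprime k (ord y)"
    using pow_ord_eq_ord_iff[OF assms] by simp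
  then show "z \<in> (\<lambda>k. y [^] k) ` totatives (ord y)"
    using k by (auto simp: in_totatives_iff)
next
  fix z assume "z \<in> (\<lambda>k. y [^] k) ` totatives (ord y)"
  then obtain k where k: "k \<in> totatives (ord y)" "z = y [^] k"
    by blast
  then have "ord z = ord y"
    using pow_ord_eq_ord_iff[OF assms] by (simp add: in_totatives_iff)
  moreover have "z \<in> generate G {y}"
    using k generate_pow_on_finite_carrier[OF assms] by blast
  ultimately show "z \<in> {z \<in> carrier G. generate G {z} = generate G {y}}"
    using generate_eq_if_ord_eq[OF assms] k assms(2) by simp
qed

lemma card_generators:
  assumes "finite (carrier G)" "y \<in> carrier G"
  shows "card {z \<in> carrier G. generate G {z} = generate G {y}} = totient (ord y)"
proof -
  have "inj_on (\<lambda>k. y [^] k) (totatives (ord y))"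
    using ord_inj'[OF assms(2)] by (rule inj_on_subset) (auto simp: in_totatives_iff)
  then show ?thesis
    unfolding generators_eq_powers[OF assms] totient_def by (rule card_image)
qed

lemma card_cyclic_subgroups_eq_sum:
  assumes "finite (carrier G)"
  shows "real (card (cyclic_subgroups G)) = (\<Sum>x\<in>carrier G. 1 / real (totient (ord x)))"
proof -
  have "(\<Sum>x\<in>carrier G. 1 / real (totient (ord x)))
      = (\<Sum>H\<in>(\<lambda>y. generate G {y}) ` carrier G.
           \<Sum>z\<in>{z \<in> carrier G. generate G {z} = H}. 1 / real (totient (ord z)))"
    by (rule sum.image_gen[OF assms])
  also have "\<dots> = (\<Sum>H\<in>(\<lambda>y. generate G {y}) ` carrier G. 1)"
  proof (rule sum.cong[OF refl])
    fix H assume "H \<in> (\<lambda>y. generate G {y}) ` carrier G"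
    then obtain y where y: "y \<in> carrier G" "H = generate G {y}"
      by blast
    have "(\<Sum>z\<in>{z \<in> carrier G. generate G {z} = H}. 1 / real (totient (ord z)))
        = (\<Sum>z\<in>{z \<in> carrier G. generate G {z} = H}. 1 / real (totient (ord y)))"
      using ord_eq_if_generate_eq[OF y(1)] y(2) by (intro sum.cong) simp_all
    also have "\<dots> = 1"
      using card_generators[OF assms y(1)] ord_ge_1[OF assms y(1)] y(2) by simp
    finally show "(\<Sum>z\<in>{z \<in> carrier G. generate G {z} = H}. 1 / real (totient (ord z))) = 1" .
  qed
  also have "(\<lambda>y. generate G {y}) ` carrier G = cyclic_subgroups G"
    by (auto simp: cyclic_subgroups_def)
  finally show ?thesis
    by simp
qed

lemma totient_dvd_sum_over_order:
  fixes F :: "'a \<Rightarrow> nat"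
  assumes "finite (carrier G)"
    and F: "\<And>y z. y \<in> carrier G \<Longrightarrow> z \<in> carrier G \<Longrightarrow> generate G {z} = generate G {y} \<Longrightarrow> F z = F y"
  shows "totient d dvd (\<Sum>y | y \<in> carrier G \<and> ord y = d. F y)"
proof -
  let ?E = "{y. y \<in> carrier G \<and> ord y = d}"
  have "totient d dvd (\<Sum>z\<in>{z \<in> ?E. generate G {z} = H}. F z)"
    if "H \<in> (\<lambda>y. generate G {y}) ` ?E" for H
  proof -
    obtain y where y: "y \<in> carrier G" "ord y = d" "H = generate G {y}"
      using \<open>H \<in> _\<close> by blast
    have "ord z = d" if "z \<in> carrier G" "generate G {z} = generate G {y}" for z
      using ord_eq_if_generate_eq[OF y(1) that] y(2) by simp
    then have fiber: "{z \<in> ?E. generate G {z} = H} = {z \<in> carrier G. generate G {z} = generate G {y}}"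
      using y(3) by blast
    have "(\<Sum>z\<in>{z \<in> ?E. generate G {z} = H}. F z) = (\<Sum>z\<in>{z \<in> ?E. generate G {z} = H}. F y)"
      using F[OF y(1)] y(3) by (intro sum.cong) simp_all
    also have "\<dots> = totient d * F y"
      unfolding fiber using card_generators[OF assms(1) y(1)] y(2) by simp
    finally show ?thesis
      by simp
  qed
  then have "totient d dvd (\<Sum>H\<in>(\<lambda>y. generate G {y}) ` ?E. \<Sum>z\<in>{z \<in> ?E. generate G {z} = H}. F z)"
    by (rule dvd_sum)
  moreover have "(\<Sum>y\<in>?E. F y) = (\<Sum>H\<in>(\<lambda>y. generate G {y}) ` ?E. \<Sum>z\<in>{z \<in> ?E. generate G {z} = H}. F z)"
    by (rule sum.image_gen) (use assms(1) in simp)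
  ultimately show ?thesis
    by argo
qed

lemma dvd_sum_class_function:
  fixes F :: "'a \<Rightarrow> nat"
  assumes "finite (carrier G)"
    and "\<And>g y. g \<in> carrier G \<Longrightarrow> y \<in> carrier G \<Longrightarrow> F (g \<otimes> y \<otimes> inv g) = F y"
    and "\<And>y. y \<in> carrier G \<Longrightarrow> k * card (centralizer G y) dvd order G * F y"
  shows "k dvd (\<Sum>y\<in>carrier G. F y)"
proof -
  let ?\<phi> = "\<lambda>g. \<lambda>h \<in> carrier G. g \<otimes> h \<otimes> inv g"
  interpret conj: group_action G "carrier G" ?\<phi>
    by (rule action_by_conjugation)
  have "k dvd (\<Sum>x\<in>Orb. F x)" if orb: "Orb \<in> orbits G (carrier G) ?\<phi>" for Orb
  proof -
    obtain y where y: "y \<in> carrier G" "Orb = orbit G ?\<phi> y"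
      using orb by (auto simp: orbits_def)
    have "(\<Sum>x\<in>Orb. F x) = (\<Sum>x\<in>Orb. F y)"
      using y assms(2) by (intro sum.cong) (auto simp: orbit_def)
    then have sum_O: "(\<Sum>x\<in>Orb. F x) = card Orb * F y"
      by simp
    have orbit_stab: "card Orb * card (centralizer G y) = order G"
      using conj.orbit_stabilizer_theorem[OF y(1)] y by (simp add: centralizer_eq_stabilizer)
    have "card (centralizer G y) > 0"
      using assms(1) y(1) finite_subset[of "centralizer G y" "carrier G"]
      by (auto simp: card_gt_0_iff centralizer_def intro!: exI[of _ \<one>])
    moreover have "k * card (centralizer G y) dvd card Orb * F y * card (centralizer G y)"
      using assms(3)[OF y(1)] orbit_stab by (simp add: ac_simps)
    ultimately show ?thesis
      unfolding sum_O by simp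
  qed
  then have "k dvd (\<Sum>Orb\<in>orbits G (carrier G) ?\<phi>. \<Sum>x\<in>Orb. F x)"
    by (rule dvd_sum)
  moreover have "(\<Sum>Orb\<in>orbits G (carrier G) ?\<phi>. \<Sum>x\<in>Orb. F x) = (\<Sum>y\<in>carrier G. F y)"
    by (rule conj.disjoint_sum[OF assms(1)])
  ultimately show ?thesis
    by argo
qed

end

section \<open>Frobenius' theorem\<close>

definition frobenius_property :: "('a, 'b) monoid_scheme \<Rightarrow> bool" where
  "frobenius_property G \<longleftrightarrow> (\<forall>n. n dvd order G \<longrightarrow> n dvd card (roots_of_unity G n))"

lemma iso_frobenius_property:
  assumes "group G" "group H" "\<phi> \<in> iso G H"
  shows "frobenius_property H \<longleftrightarrow> frobenius_property G"
proof -
  have "G \<cong> H"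
    using assms(3) by (auto simp: is_iso_def)
  then have "order H = order G"
    using iso_same_card by (metis order_def)
  then show ?thesis
    using iso_card_roots_of_unity[OF assms] by (simp add: frobenius_property_def)
qed

lemma dvd_prime_power_mult_iff:
  fixes p m d :: nat
  assumes p: "prime p" and "\<not> p dvd m" and d: "d dvd p ^ Suc a"
  shows "d dvd p ^ a * m \<longleftrightarrow> d \<noteq> p ^ Suc a"
proof
  assume "d dvd p ^ a * m"
  moreover have "\<not> p ^ Suc a dvd p ^ a * m"
    using assms(2) p by (simp add: prime_gt_0_nat)
  ultimately show "d \<noteq> p ^ Suc a"
    by blast
next
  assume "d \<noteq> p ^ Suc a"
  moreover obtain i where "i \<le> Suc a" "d = p ^ i"
    using d divides_primepow_nat[OF p] by blast
  ultimately have "i \<le> a"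
    by (auto simp: le_Suc_eq)
  then have "d dvd p ^ a"
    using \<open>d = p ^ i\<close> by (simp add: le_imp_power_dvd)
  then show "d dvd p ^ a * m"
    by simp
qed

lemma mult_dvd_mult_gcd:
  fixes m c N F :: nat
  assumes "m dvd N" "c dvd N" "gcd m c dvd F"
  shows "m * c dvd N * F"
proof -
  have "m * c = lcm m c * gcd m c"
    by (simp add: lcm_mult_gcd)
  moreover have "lcm m c dvd N"
    using assms(1,2) by (rule lcm_least)
  ultimately show ?thesis
    using mult_dvd_mono assms(3) by metis
qed

context group
begin

lemma roots_of_unity_coprime_decompose:
  fixes q m :: nat
  assumes "coprime q m" "x \<in> roots_of_unity G (q * m)"
  obtains y z where "y \<in> roots_of_unity G q" "z \<in> roots_of_unity G m \<inter> centralizer G y" "x = y \<otimes> z"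
proof -
  have x: "x \<in> carrier G" "x [^] (q * m) = \<one>"
    using assms(2) by (auto simp: roots_of_unity_def)
  obtain t where t: "[m * t = 1] (mod q)"
    using cong_solve_coprime_nat[of m q] assms(1) by (auto simp: ac_simps)
  obtain s where s: "[q * s = 1] (mod m)"
    using cong_solve_coprime_nat[OF assms(1)] by auto
  define y where "y = x [^] (m * t)"
  define z where "z = x [^] (q * s)"
  have "[m * t + q * s = 1] (mod q * m)"
  proof (rule coprime_cong_mult_nat[OF _ _ assms(1)])
    show "[m * t + q * s = 1] (mod q)"
      using cong_add[OF t cong_mult_self_left[of q s]] by simp
    show "[m * t + q * s = 1] (mod m)"
      using cong_add[OF cong_mult_self_left[of m t] s] by simp
  qed
  moreover have "ord x dvd q * m"
    using x pow_eq_id by blast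
  ultimately have "x [^] (m * t + q * s) = x [^] (1::nat)"
    using pow_eq_if_cong[OF x(1)] by blast
  then have prod: "x = y \<otimes> z"
    using x(1) by (simp add: y_def z_def nat_pow_mult)
  have "y [^] q = (x [^] (q * m)) [^] t" "z [^] m = (x [^] (q * m)) [^] s"
    using x(1) by (simp_all add: y_def z_def nat_pow_pow ac_simps)
  then have "y [^] q = \<one>" "z [^] m = \<one>"
    using x(2) by simp_all
  moreover have "z \<otimes> y = y \<otimes> z"
    using x(1) by (simp add: y_def z_def nat_pow_mult add.commute)
  moreover have "y \<in> carrier G" "z \<in> carrier G"
    using x(1) by (simp_all add: y_def z_def)
  ultimately show ?thesis
    using that[OF _ _ prod] by (simp add: roots_of_unity_def centralizer_def)
qed

lemma inj_on_mult_roots_of_unity: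
  fixes q m :: nat
  assumes "coprime q m"
  shows "inj_on (\<lambda>(y, z). y \<otimes> z) (SIGMA y:roots_of_unity G q. roots_of_unity G m \<inter> centralizer G y)"
proof -
  obtain t where t: "[m * t = 1] (mod q)"
    using cong_solve_coprime_nat[of m q] assms by (auto simp: ac_simps)
  have first_factor: "(y \<otimes> z) [^] (m * t) = y"
    if "y \<in> roots_of_unity G q" "z \<in> roots_of_unity G m \<inter> centralizer G y" for y z
  proof -
    have yz: "y \<in> carrier G" "z \<in> carrier G" "y [^] q = \<one>" "z [^] m = \<one>" "z \<otimes> y = y \<otimes> z"
      using that by (auto simp: roots_of_unity_def centralizer_def)
    have "z [^] (m * t) = \<one>"
      using yz by (simp add: nat_pow_pow[symmetric])
    moreover have "ord y dvd q"
      using yz pow_eq_id by blast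
    then have "y [^] (m * t) = y [^] (1::nat)"
      using pow_eq_if_cong[OF yz(1) _ t] by blast
    ultimately show ?thesis
      using pow_mult_distrib[of y z "m * t"] yz by simp
  qed
  show ?thesis
  proof (rule inj_onI, clarify)
    fix y z y' z'
    assume "y \<in> roots_of_unity G q" "z \<in> roots_of_unity G m" "z \<in> centralizer G y"
      and "y' \<in> roots_of_unity G q" "z' \<in> roots_of_unity G m" "z' \<in> centralizer G y'"
      and eq: "y \<otimes> z = y' \<otimes> z'"
    then have "y = y'"
      using first_factor[of y z] first_factor[of y' z'] by simp
    then show "y = y' \<and> z = z'"
      using eq \<open>y \<in> _\<close> \<open>z \<in> roots_of_unity G m\<close> \<open>z' \<in> roots_of_unity G m\<close>
      by (simp add: roots_of_unity_def)
  qed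
qed

lemma roots_of_unity_mult_bij:
  fixes q m :: nat
  assumes "coprime q m"
  shows "bij_betw (\<lambda>(y, z). y \<otimes> z)
           (SIGMA y:roots_of_unity G q. roots_of_unity G m \<inter> centralizer G y)
           (roots_of_unity G (q * m))"
  unfolding bij_betw_def
proof (intro conjI inj_on_mult_roots_of_unity[OF assms] equalityI subsetI)
  fix x assume "x \<in> (\<lambda>(y, z). y \<otimes> z) ` (SIGMA y:roots_of_unity G q. roots_of_unity G m \<inter> centralizer G y)"
  then obtain y z where yz: "y \<in> carrier G" "z \<in> carrier G" "y [^] q = \<one>" "z [^] m = \<one>"
    "z \<otimes> y = y \<otimes> z" "x = y \<otimes> z"
    by (auto simp: roots_of_unity_def centralizer_def)
  have "y [^] (q * m) = \<one>"
    using yz by (simp add: nat_pow_pow[symmetric])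
  moreover have "z [^] (q * m) = \<one>"
    using yz by (simp add: nat_pow_pow[symmetric] mult.commute[of q m])
  ultimately show "x \<in> roots_of_unity G (q * m)"
    using yz pow_mult_distrib[of y z "q * m"] by (simp add: roots_of_unity_def)
next
  fix x assume "x \<in> roots_of_unity G (q * m)"
  then obtain y z where "y \<in> roots_of_unity G q" "z \<in> roots_of_unity G m \<inter> centralizer G y" "x = y \<otimes> z"
    using roots_of_unity_coprime_decompose[OF assms] by blast
  then show "x \<in> (\<lambda>(y, z). y \<otimes> z) ` (SIGMA y:roots_of_unity G q. roots_of_unity G m \<inter> centralizer G y)"
    by (intro image_eqI[of _ _ "(y, z)"]) auto
qed

lemma mult_in_roots_of_unity_iff:
  fixes p a m :: nat
  assumes p: "prime p" and pm: "\<not> p dvd m"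
    and y: "y \<in> roots_of_unity G (p ^ Suc a)" and z: "z \<in> roots_of_unity G m \<inter> centralizer G y"
  shows "y \<otimes> z \<in> roots_of_unity G (p ^ a * m) \<longleftrightarrow> ord y \<noteq> p ^ Suc a"
proof -
  have yz: "y \<in> carrier G" "z \<in> carrier G" "ord y dvd p ^ Suc a" "z [^] m = \<one>" "z \<otimes> y = y \<otimes> z"
    using y z by (auto simp: roots_of_unity_eq_ord_dvd centralizer_def pow_eq_id)
  have "z [^] (p ^ a * m) = \<one>"
    using yz by (simp add: nat_pow_pow[symmetric] mult.commute[of "p ^ a"])
  then have "(y \<otimes> z) [^] (p ^ a * m) = y [^] (p ^ a * m)"
    using pow_mult_distrib[of y z "p ^ a * m"] yz by simp
  then have "y \<otimes> z \<in> roots_of_unity G (p ^ a * m) \<longleftrightarrow> ord y dvd p ^ a * m"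
    using yz pow_eq_id by (simp add: roots_of_unity_def)
  also have "\<dots> \<longleftrightarrow> ord y \<noteq> p ^ Suc a"
    using dvd_prime_power_mult_iff[OF p pm yz(3)] .
  finally show ?thesis .
qed

lemma card_roots_of_unity_prime_power_step:
  fixes p a m :: nat
  assumes fin: "finite (carrier G)" and p: "prime p" and pm: "\<not> p dvd m"
  shows "card (roots_of_unity G (p ^ Suc a * m)) = card (roots_of_unity G (p ^ a * m))
           + (\<Sum>y | y \<in> carrier G \<and> ord y = p ^ Suc a. card (roots_of_unity G m \<inter> centralizer G y))"
proof -
  let ?q = "p ^ Suc a" and ?n = "p ^ a * m"
  let ?f = "\<lambda>(y, z). y \<otimes> z" and ?S = "\<lambda>y. roots_of_unity G m \<inter> centralizer G y"
  let ?E = "{y. y \<in> carrier G \<and> ord y = ?q}" and ?A = "SIGMA y:roots_of_unity G ?q. ?S y"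
  have "coprime ?q m"
    using prime_imp_coprime[OF p pm] by simp
  then have bij: "bij_betw ?f ?A (roots_of_unity G (?q * m))"
    by (rule roots_of_unity_mult_bij)
  have new_root_iff: "?f yz \<notin> roots_of_unity G ?n \<longleftrightarrow> fst yz \<in> ?E" if "yz \<in> ?A" for yz
    using that mult_in_roots_of_unity_iff[OF p pm] by (auto simp: roots_of_unity_def)
  have "(SIGMA y:?E. ?S y) = {yz \<in> ?A. fst yz \<in> ?E}"
    by (auto simp: roots_of_unity_eq_ord_dvd)
  also have "?f ` \<dots> = {x \<in> ?f ` ?A. x \<notin> roots_of_unity G ?n}"
  proof (intro equalityI subsetI)
    fix x assume "x \<in> ?f ` {yz \<in> ?A. fst yz \<in> ?E}"
    then show "x \<in> {x \<in> ?f ` ?A. x \<notin> roots_of_unity G ?n}"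
      using new_root_iff by blast
  next
    fix x assume "x \<in> {x \<in> ?f ` ?A. x \<notin> roots_of_unity G ?n}"
    then obtain yz where "yz \<in> ?A" "x = ?f yz" "?f yz \<notin> roots_of_unity G ?n"
      by blast
    then show "x \<in> ?f ` {yz \<in> ?A. fst yz \<in> ?E}"
      using new_root_iff by blast
  qed
  also have "\<dots> = roots_of_unity G (?q * m) - roots_of_unity G ?n"
    using bij_betw_imp_surj_on[OF bij] by blast
  finally have "bij_betw ?f (SIGMA y:?E. ?S y) (roots_of_unity G (?q * m) - roots_of_unity G ?n)"
    by (intro bij_betw_subset[OF bij]) (auto simp: roots_of_unity_eq_ord_dvd)
  then have "card (roots_of_unity G (?q * m) - roots_of_unity G ?n) = (\<Sum>y\<in>?E. card (?S y))"
    using fin by (simp add: bij_betw_same_card[symmetric] card_SigmaI finite_roots_of_unity)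
  moreover have "roots_of_unity G ?n \<subseteq> roots_of_unity G (?q * m)"
    by (rule roots_of_unity_mono) simp
  ultimately show ?thesis
    using card_Diff_subset[OF finite_roots_of_unity[OF fin]] card_mono[OF finite_roots_of_unity[OF fin]]
    by (metis add_diff_inverse_nat not_le)
qed

lemma prime_power_dvd_sum_centralizer_roots:
  fixes p a m :: nat
  assumes fin: "finite (carrier G)" and p: "prime p"
  shows "p ^ a dvd (\<Sum>y | y \<in> carrier G \<and> ord y = p ^ Suc a. card (roots_of_unity G m \<inter> centralizer G y))"
proof -
  have "totient (p ^ Suc a) dvd (\<Sum>y | y \<in> carrier G \<and> ord y = p ^ Suc a. card (roots_of_unity G m \<inter> centralizer G y))"
  proof (rule totient_dvd_sum_over_order[OF fin])
    fix y z assume "y \<in> carrier G" "z \<in> carrier G" "generate G {z} = generate G {y}"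
    then have "centralizer G z = centralizer G y"
      by (rule centralizer_eq_if_generate_eq)
    then show "card (roots_of_unity G m \<inter> centralizer G z) = card (roots_of_unity G m \<inter> centralizer G y)"
      by simp
  qed
  moreover have "p ^ a dvd totient (p ^ Suc a)"
    unfolding totient_prime_power_Suc[OF p] by simp
  ultimately show ?thesis
    by (rule dvd_trans[rotated])
qed

lemma central_subgroup_normal:
  assumes "subgroup Y G" and central: "\<And>c g. c \<in> Y \<Longrightarrow> g \<in> carrier G \<Longrightarrow> c \<otimes> g = g \<otimes> c"
  shows "Y \<lhd> G"
proof (rule normalI[OF assms(1)], intro ballI)
  fix g assume "g \<in> carrier G"
  then have "{c \<otimes> g |c. c \<in> Y} = {g \<otimes> c |c. c \<in> Y}"
    using central by metis
  then show "Y #> g = g <# Y"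
    by (simp add: r_coset_def l_coset_def) blast
qed

lemma central_root_in_coset:
  fixes m q :: nat
  assumes Y: "subgroup Y G" and central: "\<And>c g. c \<in> Y \<Longrightarrow> g \<in> carrier G \<Longrightarrow> c \<otimes> g = g \<otimes> c"
    and exponent: "\<And>c. c \<in> Y \<Longrightarrow> c [^] q = \<one>" and "coprime m q"
    and g: "g \<in> carrier G" "g [^] m \<in> Y"
  obtains c where "c \<in> Y" "(c \<otimes> g) [^] m = \<one>"
proof -
  have gm: "g [^] m \<in> carrier G"
    using g(1) by simp
  obtain u where u: "[m * u = 1] (mod q)"
    using cong_solve_coprime_nat[OF assms(4)] by auto
  define w where "w = (g [^] m) [^] u"
  have wY: "w \<in> Y"
    using subgroup_int_pow_closed[OF Y g(2), of "int u"] by (simp add: w_def int_pow_int)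
  have "ord (g [^] m) dvd q"
    using exponent[OF g(2)] pow_eq_id[OF gm] by blast
  then have "(g [^] m) [^] (m * u) = (g [^] m) [^] (1::nat)"
    using pow_eq_if_cong[OF gm _ u] by blast
  then have wm: "w [^] m = g [^] m"
    using g(1) by (simp add: w_def nat_pow_pow mult.commute)
  have iw: "inv w \<in> Y" "inv w \<in> carrier G"
    using subgroup.m_inv_closed[OF Y wY] subgroup.subset[OF Y] by auto
  have "(inv w \<otimes> g) [^] m = (inv w) [^] m \<otimes> g [^] m"
    using central[OF iw(1) g(1)] iw(2) g(1) by (rule pow_mult_distrib)
  also have "\<dots> = \<one>"
    using wm wY subgroup.subset[OF Y] g(1) by (auto simp: nat_pow_inv)
  finally show ?thesis
    using that iw(1) by blast
qed

lemma central_coset_inj_on_roots_of_unity: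
  fixes m q :: nat
  assumes Y: "subgroup Y G" and central: "\<And>c g. c \<in> Y \<Longrightarrow> g \<in> carrier G \<Longrightarrow> c \<otimes> g = g \<otimes> c"
    and exponent: "\<And>c. c \<in> Y \<Longrightarrow> c [^] q = \<one>" and "coprime m q"
  shows "inj_on (\<lambda>z. Y #> z) (roots_of_unity G m)"
proof (rule inj_onI)
  fix z z' assume "z \<in> roots_of_unity G m" "z' \<in> roots_of_unity G m" and eq: "Y #> z = Y #> z'"
  then have z: "z \<in> carrier G" "z [^] m = \<one>" and z': "z' \<in> carrier G" "z' [^] m = \<one>"
    by (auto simp: roots_of_unity_def)
  have "z' \<in> Y #> z"
    using eq repr_independenceD[OF Y z'(1)] by simp
  then obtain c where c: "c \<in> Y" "z' = c \<otimes> z"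
    by (auto simp: r_coset_def)
  have cG: "c \<in> carrier G"
    using c(1) subgroup.subset[OF Y] by blast
  have "z' [^] m = c [^] m \<otimes> z [^] m"
    using c cG z(1) central[OF c(1) z(1)] pow_mult_distrib by simp
  then have "c [^] m = \<one>"
    using z z' cG by simp
  then have "c = \<one>"
    using eq_one_if_coprime_exponents[OF cG _ exponent[OF c(1)] assms(4)] by simp
  then show "z = z'"
    using c z(1) by simp
qed

lemma central_quotient_roots_of_unity_bij:
  fixes m q :: nat
  assumes Y: "subgroup Y G" and central: "\<And>c g. c \<in> Y \<Longrightarrow> g \<in> carrier G \<Longrightarrow> c \<otimes> g = g \<otimes> c"
    and exponent: "\<And>c. c \<in> Y \<Longrightarrow> c [^] q = \<one>" and "coprime m q"
  shows "bij_betw (\<lambda>z. Y #> z) (roots_of_unity G m) (roots_of_unity (G Mod Y) m)"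
proof -
  interpret normal Y G
    using central_subgroup_normal[OF Y central] .
  have pow_coset: "(Y #> z) [^]\<^bsub>G Mod Y\<^esub> k = Y #> z [^] k" if "z \<in> carrier G" for z and k :: nat
    using FactGroup_pow[OF that] .
  have coset_eq_Y: "Y #> z = Y \<longleftrightarrow> z \<in> Y" if "z \<in> carrier G" for z
    using rcos_const[OF is_group] rcos_self[OF that Y] by blast
  have "(\<lambda>z. Y #> z) ` roots_of_unity G m = roots_of_unity (G Mod Y) m"
  proof (intro equalityI subsetI)
    fix X assume "X \<in> (\<lambda>z. Y #> z) ` roots_of_unity G m"
    then obtain z where "z \<in> carrier G" "z [^] m = \<one>" "X = Y #> z"
      by (auto simp: roots_of_unity_def)
    then show "X \<in> roots_of_unity (G Mod Y) m"
      using pow_coset coset_eq_Y[of \<one>] by (auto simp: roots_of_unity_def FactGroup_def RCOSETS_def)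
  next
    fix X assume "X \<in> roots_of_unity (G Mod Y) m"
    then obtain g where g: "g \<in> carrier G" "X = Y #> g" and "(Y #> g) [^]\<^bsub>G Mod Y\<^esub> m = Y"
      by (auto simp: roots_of_unity_def FactGroup_def RCOSETS_def)
    then have "g [^] m \<in> Y"
      using pow_coset coset_eq_Y by simp
    then obtain c where c: "c \<in> Y" "(c \<otimes> g) [^] m = \<one>"
      using central_root_in_coset[OF Y central exponent assms(4) g(1)] by blast
    have cG: "c \<in> carrier G"
      using c(1) subset by blast
    have "Y #> (c \<otimes> g) = Y #> g"
      using c(1) cG g(1) rcos_const[OF is_group c(1)] coset_mult_assoc[OF subset cG g(1)] by simp
    then show "X \<in> (\<lambda>z. Y #> z) ` roots_of_unity G m"
      using c cG g by (auto simp: roots_of_unity_def)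
  qed
  then show ?thesis
    using central_coset_inj_on_roots_of_unity[OF assms] by (simp add: bij_betw_def)
qed

end

definition centralizer_quotient :: "('a, 'b) monoid_scheme \<Rightarrow> 'a \<Rightarrow> 'a set monoid" where
  "centralizer_quotient G y = G\<lparr>carrier := centralizer G y\<rparr> Mod generate G {y}"

context group
begin

lemma generate_central_in_centralizer:
  assumes "y \<in> carrier G" "c \<in> generate G {y}" "g \<in> centralizer G y"
  shows "c \<otimes> g = g \<otimes> c"
proof -
  have "generate G {y} \<subseteq> centralizer G g"
    using assms(3) centralizer_generate[OF assms(1)] by blast
  then show ?thesis
    using assms(2) by (auto simp: centralizer_def)
qed

lemma generate_subgroup_centralizer:
  assumes "y \<in> carrier G"
  shows "subgroup (generate G {y}) (G\<lparr>carrier := centralizer G y\<rparr>)"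
proof (rule subgroup_incl)
  show "subgroup (generate G {y}) G"
    using generate_is_subgroup assms by simp
  show "subgroup (centralizer G y) G"
    using centralizer_subgroup[OF assms] .
  show "generate G {y} \<subseteq> centralizer G y"
    using generate_subgroup_incl[OF _ centralizer_subgroup[OF assms]] assms by (simp add: centralizer_def)
qed

lemma generate_normal_centralizer:
  assumes "y \<in> carrier G"
  shows "generate G {y} \<lhd> G\<lparr>carrier := centralizer G y\<rparr>"
proof (rule group.central_subgroup_normal[OF subgroup_imp_group[OF centralizer_subgroup[OF assms]]
      generate_subgroup_centralizer[OF assms]])
  fix c g assume "c \<in> generate G {y}" "g \<in> carrier (G\<lparr>carrier := centralizer G y\<rparr>)"
  then show "c \<otimes>\<^bsub>G\<lparr>carrier := centralizer G y\<rparr>\<^esub> g = g \<otimes>\<^bsub>G\<lparr>carrier := centralizer G y\<rparr>\<^esub> c"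
    using generate_central_in_centralizer[OF assms] by simp
qed

lemma group_centralizer_quotient: "y \<in> carrier G \<Longrightarrow> group (centralizer_quotient G y)"
  unfolding centralizer_quotient_def
  using normal.factorgroup_is_group[OF generate_normal_centralizer] .

lemma order_centralizer_quotient:
  assumes "y \<in> carrier G"
  shows "order (centralizer_quotient G y) * ord y = card (centralizer G y)"
  using group.lagrange[OF subgroup_imp_group[OF centralizer_subgroup[OF assms]]
      generate_subgroup_centralizer[OF assms]] generate_pow_card[OF assms]
  by (simp add: centralizer_quotient_def FactGroup_def order_def)

lemma card_roots_of_unity_centralizer_quotient:
  fixes m :: nat
  assumes "finite (carrier G)" "y \<in> carrier G" "coprime m (ord y)"
  shows "card (roots_of_unity G m \<inter> centralizer G y) = card (roots_of_unity (centralizer_quotient G y) m)"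
proof -
  let ?H = "G\<lparr>carrier := centralizer G y\<rparr>"
  have H: "group ?H"
    using subgroup_imp_group[OF centralizer_subgroup[OF assms(2)]] .
  have exponent: "c [^]\<^bsub>?H\<^esub> ord y = \<one>\<^bsub>?H\<^esub>" if "c \<in> generate G {y}" for c
  proof -
    obtain k :: nat where "c = y [^] k"
      using \<open>c \<in> _\<close> generate_pow_on_finite_carrier[OF assms(1,2)] by auto
    then have "c [^] ord y = y [^] (k * ord y)"
      using assms(2) by (simp add: nat_pow_pow)
    also have "\<dots> = \<one>"
      using pow_eq_id[OF assms(2)] by simp
    finally show ?thesis
      by (simp add: nat_pow_consistent[symmetric])
  qed
  have "bij_betw (\<lambda>z. generate G {y} #>\<^bsub>?H\<^esub> z) (roots_of_unity ?H m) (roots_of_unity (centralizer_quotient G y) m)"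
    unfolding centralizer_quotient_def
  proof (rule group.central_quotient_roots_of_unity_bij[OF H generate_subgroup_centralizer[OF assms(2)] _ exponent assms(3)])
    fix c g assume "c \<in> generate G {y}" "g \<in> carrier ?H"
    then show "c \<otimes>\<^bsub>?H\<^esub> g = g \<otimes>\<^bsub>?H\<^esub> c"
      using generate_central_in_centralizer[OF assms(2)] by simp
  qed
  then show ?thesis
    using roots_of_unity_subgroup[OF centralizer_subgroup[OF assms(2)]] bij_betw_same_card by metis
qed

lemma gcd_dvd_card_roots_of_unity_centralizer:
  fixes m :: nat
  assumes fin: "finite (carrier G)" and y: "y \<in> carrier G" "y \<noteq> \<one>" and cop: "coprime m (ord y)"
    and IH: "\<And>Q :: 'a set monoid. group Q \<Longrightarrow> finite (carrier Q) \<Longrightarrow> order Q < order G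
               \<Longrightarrow> frobenius_property Q"
  shows "gcd m (card (centralizer G y)) dvd card (roots_of_unity G m \<inter> centralizer G y)"
proof -
  let ?Q = "centralizer_quotient G y" and ?C = "centralizer G y"
  have Q: "group ?Q"
    using group_centralizer_quotient[OF y(1)] .
  have finC: "finite ?C"
    using fin by (rule finite_subset[rotated]) (auto simp: centralizer_def)
  have finQ: "finite (carrier ?Q)"
    using finC by (simp add: centralizer_quotient_def FactGroup_def RCOSETS_def)
  have lagr: "order ?Q * ord y = card ?C"
    using order_centralizer_quotient[OF y(1)] .
  have "ord y > 1"
    using ord_ge_1[OF fin y(1)] ord_eq_1 y by fastforce
  moreover have "order ?Q > 0"
    using monoid.order_gt_0_iff_finite[OF group.is_monoid[OF Q]] finQ by simp
  ultimately have "order ?Q * 1 < order ?Q * ord y"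
    by (rule mult_strict_left_mono)
  moreover have "card ?C \<le> order G"
    unfolding order_def using card_mono[OF fin subgroup.subset[OF centralizer_subgroup[OF y(1)]]] .
  ultimately have "order ?Q < order G"
    using lagr by linarith
  then have "gcd m (order ?Q) dvd card (roots_of_unity ?Q (gcd m (order ?Q)))"
    using IH[OF Q finQ] by (simp add: frobenius_property_def)
  also have "roots_of_unity ?Q (gcd m (order ?Q)) = roots_of_unity ?Q m"
    using group.roots_of_unity_gcd_order[OF Q finQ] .
  also have "card \<dots> = card (roots_of_unity G m \<inter> ?C)"
    using card_roots_of_unity_centralizer_quotient[OF fin y(1) cop] by simp
  also have "gcd m (order ?Q) = gcd m (card ?C)"
    using lagr[symmetric] cop by (simp add: gcd_mult_right_right_cancel)
  finally show ?thesis .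
qed

lemma dvd_sum_centralizer_roots:
  fixes p a m :: nat
  assumes fin: "finite (carrier G)" and p: "prime p" and pm: "\<not> p dvd m" and "m dvd order G"
    and IH: "\<And>Q :: 'a set monoid. group Q \<Longrightarrow> finite (carrier Q) \<Longrightarrow> order Q < order G
               \<Longrightarrow> frobenius_property Q"
  shows "m dvd (\<Sum>y | y \<in> carrier G \<and> ord y = p ^ Suc a. card (roots_of_unity G m \<inter> centralizer G y))"
proof -
  let ?q = "p ^ Suc a" and ?S = "\<lambda>y. card (roots_of_unity G m \<inter> centralizer G y)"
  have "m dvd (\<Sum>y\<in>carrier G. if ord y = ?q then ?S y else 0)"
  proof (rule dvd_sum_class_function[OF fin])
    fix g y assume gy: "g \<in> carrier G" "y \<in> carrier G"
    have "ord (g \<otimes> y \<otimes> inv g) = ord y"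
      using iso_ord[OF is_group conjugation_iso[OF gy(1)] gy(2)] .
    moreover have "?S (g \<otimes> y \<otimes> inv g) = ?S y"
      using conjugation_card_roots_of_unity_centralizer[OF gy] .
    ultimately show "(if ord (g \<otimes> y \<otimes> inv g) = ?q then ?S (g \<otimes> y \<otimes> inv g) else 0)
             = (if ord y = ?q then ?S y else 0)"
      by simp
  next
    fix y assume y: "y \<in> carrier G"
    show "m * card (centralizer G y) dvd order G * (if ord y = ?q then ?S y else 0)"
    proof (cases "ord y = ?q")
      case True
      have "y \<noteq> \<one>"
        using True p by (auto simp: prime_gt_1_nat)
      moreover have "coprime m (ord y)"
        using True prime_imp_coprime[OF p pm] by (simp add: coprime_commute)
      ultimately have "gcd m (card (centralizer G y)) dvd ?S y"
        using gcd_dvd_card_roots_of_unity_centralizer[OF fin y] IH by blast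
      then show ?thesis
        using True mult_dvd_mult_gcd \<open>m dvd order G\<close> centralizer_card_dvd_order[OF y] by simp
    qed simp
  qed
  then show ?thesis
    unfolding sum.inter_filter[OF fin] .
qed

text \<open>With \<open>n = p\<^sup>a m\<close>, the roots of order dividing \<open>pn\<close> but not \<open>n\<close> are the products \<open>y z\<close> with
  \<open>ord y = p\<^bsup>a+1\<^esup>\<close> and \<open>z\<close> an \<open>m\<close>-th root of unity commuting with \<open>y\<close>.  Grouping the \<open>y\<close> by the
  subgroup they generate shows that \<open>p\<^sup>a\<close> divides their number, grouping them by conjugacy class
  that \<open>m\<close> does.\<close>
lemma dvd_card_roots_of_unity_step:
  assumes fin: "finite (carrier G)" and p: "prime p"
    and pn: "p * n dvd order G" "p * n dvd card (roots_of_unity G (p * n))"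
    and IH: "\<And>Q :: 'a set monoid. group Q \<Longrightarrow> finite (carrier Q) \<Longrightarrow> order Q < order G
               \<Longrightarrow> frobenius_property Q"
  shows "n dvd card (roots_of_unity G n)"
proof -
  have "n \<noteq> 0"
    using pn(1) fin order_gt_0_iff_finite by auto
  define a where "a = multiplicity p n"
  define m where "m = n div p ^ a"
  have n: "n = p ^ a * m"
    by (simp add: m_def a_def multiplicity_dvd)
  have pm: "\<not> p dvd m"
    unfolding m_def a_def using \<open>n \<noteq> 0\<close> p multiplicity_decompose not_prime_unit by blast
  let ?\<Sigma> = "\<Sum>y | y \<in> carrier G \<and> ord y = p ^ Suc a. card (roots_of_unity G m \<inter> centralizer G y)"
  have split: "card (roots_of_unity G (p * n)) = card (roots_of_unity G n) + ?\<Sigma>"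
    using card_roots_of_unity_prime_power_step[OF fin p pm, of a] n by (simp add: ac_simps)
  have "m dvd order G"
    using pn(1) n by (metis dvd_mult_left dvd_mult_right dvd_trans)
  then have "p ^ a * m dvd ?\<Sigma>"
    using divides_mult[OF prime_power_dvd_sum_centralizer_roots[OF fin p] dvd_sum_centralizer_roots[OF fin p pm _ IH]]
      prime_imp_coprime[OF p pm] by simp
  moreover have "n dvd card (roots_of_unity G (p * n))"
    using pn(2) by (rule dvd_mult_right)
  ultimately show ?thesis
    using split n by (simp add: dvd_add_left_iff)
qed

lemma frobenius_property_step:
  assumes fin: "finite (carrier G)"
    and IH: "\<And>Q :: 'a set monoid. group Q \<Longrightarrow> finite (carrier Q) \<Longrightarrow> order Q < order G
               \<Longrightarrow> frobenius_property Q"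
  shows "frobenius_property G"
  unfolding frobenius_property_def
proof (intro allI impI)
  have "order G > 0"
    using order_gt_0_iff_finite fin by simp
  fix n assume "n dvd order G"
  then show "n dvd card (roots_of_unity G n)"
  proof (induction "order G div n" arbitrary: n rule: less_induct)
    case (less n)
    show ?case
    proof (cases "n = order G")
      case True
      then have "roots_of_unity G n = carrier G"
        using pow_order_eq_1 by (auto simp: roots_of_unity_def)
      then show ?thesis
        using True by (simp add: order_def)
    next
      case False
      obtain k where k: "order G = n * k"
        using less.prems by blast
      then have "k \<noteq> 1" "n > 0" "k > 0"
        using False \<open>order G > 0\<close> by auto
      then obtain p where p: "prime p" "p dvd k"
        using prime_factor_nat by blast
      then have pn: "p * n dvd order G"
        using k by (simp add: mult.commute mult_dvd_mono)
      have "k div p < k"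
        using prime_gt_1_nat[OF p(1)] \<open>k > 0\<close> by simp
      then have "order G div (p * n) < order G div n"
        using k p \<open>n > 0\<close> by (auto simp: div_mult2_eq)
      then have "p * n dvd card (roots_of_unity G (p * n))"
        using less.hyps pn by blast
      then show ?thesis
        using dvd_card_roots_of_unity_step[OF fin p(1) pn] IH by blast
    qed
  qed
qed

end

text \<open>The induction on the order passes to quotient groups, whose elements are sets; stating it
  for \<open>nat monoid\<close> and transporting along isomorphisms keeps it within a single type.\<close>
lemma frobenius_property_nat_monoid:
  fixes G :: "nat monoid"
  assumes "group G" "finite (carrier G)"
  shows "frobenius_property G"
  using assms
proof (induction "order G" arbitrary: G rule: less_induct)
  case less
  show ?case
  proof (rule group.frobenius_property_step[OF less.prems])
    fix Q :: "nat set monoid"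
    assume Q: "group Q" "finite (carrier Q)" "order Q < order G"
    obtain H :: "nat monoid" and \<phi> where H: "group H" "finite (carrier H)" "order H = order Q" "\<phi> \<in> iso Q H"
      using ex_iso_nat_group[OF Q(1,2)] .
    then show "frobenius_property Q"
      using less.hyps[of H] Q(3) iso_frobenius_property[OF Q(1) H(1,4)] by simp
  qed
qed

theorem frobenius_theorem:
  assumes "group G" "finite (carrier G)"
  shows "frobenius_property G"
proof -
  obtain H :: "nat monoid" and \<phi> where H: "group H" "finite (carrier H)" "order H = order G" "\<phi> \<in> iso G H"
    using ex_iso_nat_group[OF assms] .
  then show ?thesis
    using frobenius_property_nat_monoid[OF H(1,2)] iso_frobenius_property[OF assms(1) H(1,4)] by simp
qed

context group
begin

lemma card_roots_of_unity_ge: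
  assumes "finite (carrier G)" "e dvd order G"
  shows "e \<le> card (roots_of_unity G e)"
proof -
  have "e dvd card (roots_of_unity G e)"
    using frobenius_theorem[OF is_group assms(1)] assms(2) by (simp add: frobenius_property_def)
  moreover have "card (roots_of_unity G e) > 0"
    using assms(1) one_in_roots_of_unity by (auto simp: card_gt_0_iff finite_roots_of_unity)
  ultimately show ?thesis
    by (rule dvd_imp_le)
qed

end

section \<open>Roots of unity in cyclic groups\<close>

context group
begin

lemma generate_singleton_subset: "x \<in> carrier G \<Longrightarrow> generate G {x} \<subseteq> carrier G"
  using generate_is_subgroup[of "{x}"] subgroup.subset by auto

lemma generate_eq_carrier_iff_ord:
  assumes "finite (carrier G)" "x \<in> carrier G"
  shows "generate G {x} = carrier G \<longleftrightarrow> ord x = order G"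
  using card_subset_eq[OF assms(1) generate_singleton_subset[OF assms(2)]] generate_pow_card[OF assms(2)]
  by (auto simp: order_def)

lemma cyclic_group_iff_ord_eq_order:
  assumes "finite (carrier G)"
  shows "cyclic_group G \<longleftrightarrow> (\<exists>x \<in> carrier G. ord x = order G)"
proof -
  have "subgroup_generated G {x} = G \<longleftrightarrow> generate G {x} = carrier G" if "x \<in> carrier G" for x
  proof
    assume "subgroup_generated G {x} = G"
    then show "generate G {x} = carrier G"
      using that carrier_subgroup_generated[of G "{x}"] by (metis Int_insert_right_if1 inf_bot_right)
  next
    assume "generate G {x} = carrier G"
    then show "subgroup_generated G {x} = G"
      using that by (simp add: subgroup_generated_def)
  qed
  then show ?thesis
    using generate_eq_carrier_iff_ord[OF assms] by (auto simp: cyclic_group_def)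
qed

lemma cyclic_card_roots_of_unity:
  assumes fin: "finite (carrier G)" and "cyclic_group G" and e: "e dvd order G"
  shows "card (roots_of_unity G e) = e"
proof -
  obtain x where x: "x \<in> carrier G" "ord x = order G"
    using assms(2) cyclic_group_iff_ord_eq_order[OF fin] by blast
  have "order G > 0"
    using fin order_gt_0_iff_finite by simp
  then have "e > 0"
    using e by (auto intro: gr0I)
  define r where "r = order G div e"
  have n: "order G = r * e"
    using e by (simp add: r_def)
  then have "r \<noteq> 0" "r dvd ord x"
    using \<open>order G > 0\<close> x(2) by auto
  then have ord_xr: "ord (x [^] r) = e"
    using ord_pow[OF x(1)] x(2) n \<open>e > 0\<close> by simp
  have "roots_of_unity G e \<subseteq> generate G {x [^] r}"
  proof
    fix z assume z: "z \<in> roots_of_unity G e"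
    then have "z \<in> generate G {x}"
      using generate_eq_carrier_iff_ord[OF fin x(1)] x(2) by (simp add: roots_of_unity_def)
    then obtain k :: nat where k: "z = x [^] k"
      using generate_pow_on_finite_carrier[OF fin x(1)] by blast
    have "x [^] (k * e) = \<one>"
      using z k x(1) by (simp add: roots_of_unity_def nat_pow_pow)
    then have "r * e dvd k * e"
      using pow_eq_id[OF x(1)] x(2) n by simp
    then obtain j where "k = r * j"
      using \<open>e > 0\<close> by (auto elim: dvdE)
    then have "z = (x [^] r) [^] j"
      using k x(1) by (simp add: nat_pow_pow)
    then show "z \<in> generate G {x [^] r}"
      using generate_pow_on_finite_carrier[OF fin nat_pow_closed[OF x(1)]] by blast
  qed
  moreover have "finite (generate G {x [^] r})"
    using fin generate_singleton_subset[OF nat_pow_closed[OF x(1)]] by (rule finite_subset[rotated])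
  ultimately have "card (roots_of_unity G e) \<le> e"
    using card_mono generate_pow_card[OF nat_pow_closed[OF x(1)]] ord_xr by metis
  then show ?thesis
    using card_roots_of_unity_ge[OF fin e] by simp
qed

lemma card_roots_of_unity_eq_sum_orders:
  assumes "finite (carrier G)" "e > 0"
  shows "card (roots_of_unity G e) = (\<Sum>d | d dvd e. card {x \<in> carrier G. ord x = d})"
proof -
  have "roots_of_unity G e = (\<Union>d \<in> {d. d dvd e}. {x \<in> carrier G. ord x = d})"
    by (auto simp: roots_of_unity_eq_ord_dvd)
  moreover have "card (\<Union>d \<in> {d. d dvd e}. {x \<in> carrier G. ord x = d})
      = (\<Sum>d | d dvd e. card {x \<in> carrier G. ord x = d})"
    by (rule card_UN_disjoint) (use assms in auto)
  ultimately show ?thesis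
    by simp
qed

lemma card_elements_of_order_eq_totient:
  assumes fin: "finite (carrier G)" and L: "\<And>e. e dvd order G \<Longrightarrow> card (roots_of_unity G e) = e"
  shows "d dvd order G \<Longrightarrow> card {x \<in> carrier G. ord x = d} = totient d"
proof (induction d rule: less_induct)
  case (less e)
  let ?t = "\<lambda>d. card {x \<in> carrier G. ord x = d}" and ?D = "{d. d dvd e} - {e}"
  have "e > 0"
    using less.prems fin order_gt_0_iff_finite by (auto intro: gr0I)
  have smaller: "?t d = totient d" if "d \<in> ?D" for d
  proof -
    have "d < e"
      using that \<open>e > 0\<close> by (auto simp: dvd_imp_le le_neq_implies_less)
    moreover have "d dvd order G"
      using that less.prems by (auto intro: dvd_trans)
    ultimately show ?thesis
      using less.IH by blast
  qed
  have fin_div: "finite {d. d dvd e}" and "e \<in> {d. d dvd e}"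
    using \<open>e > 0\<close> by simp_all
  have "?t e + (\<Sum>d \<in> ?D. ?t d) = e"
    using card_roots_of_unity_eq_sum_orders[OF fin \<open>e > 0\<close>] L[OF less.prems]
      sum.remove[OF fin_div \<open>e \<in> _\<close>, of ?t] by simp
  moreover have "e = totient e + (\<Sum>d \<in> ?D. totient d)"
    using totient_divisor_sum[of e] sum.remove[OF fin_div \<open>e \<in> _\<close>, of totient] by simp
  moreover have "(\<Sum>d \<in> ?D. ?t d) = (\<Sum>d \<in> ?D. totient d)"
    using smaller by (rule sum.cong[OF refl])
  ultimately show ?case
    by simp
qed

lemma cyclic_if_card_roots_of_unity_eq:
  assumes fin: "finite (carrier G)" and L: "\<And>e. e dvd order G \<Longrightarrow> card (roots_of_unity G e) = e"
  shows "cyclic_group G"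
proof -
  have "card {x \<in> carrier G. ord x = order G} > 0"
    using card_elements_of_order_eq_totient[OF fin L dvd_refl] fin order_gt_0_iff_finite by simp
  then have "\<exists>x \<in> carrier G. ord x = order G"
    by (auto simp: card_gt_0_iff)
  then show ?thesis
    using cyclic_group_iff_ord_eq_order[OF fin] by simp
qed

lemma card_roots_of_unity_odd_eq:
  assumes fin: "finite (carrier G)" and "2 * e dvd order G" "odd e"
    and double: "card (roots_of_unity G (2 * e)) = 2 * e"
  shows "card (roots_of_unity G e) = e"
proof -
  have sub: "roots_of_unity G e \<subseteq> roots_of_unity G (2 * e)"
    by (rule roots_of_unity_mono) simp
  have e: "e dvd order G"
    using assms(2) by (rule dvd_mult_right)
  obtain k where k: "card (roots_of_unity G e) = e * k"
    using frobenius_theorem[OF is_group fin] e by (auto simp: frobenius_property_def elim: dvdE)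
  have "e > 0"
    using \<open>odd e\<close> by (auto intro: gr0I)
  have "e * k \<le> e * 2"
    using card_mono[OF finite_roots_of_unity[OF fin] sub] double k by simp
  moreover have "e * 1 \<le> e * k"
    using card_roots_of_unity_ge[OF fin e] k by simp
  moreover have "k \<noteq> 2"
  proof
    assume "k = 2"
    then have same: "roots_of_unity G e = roots_of_unity G (2 * e)"
      using card_subset_eq[OF finite_roots_of_unity[OF fin] sub] double k by simp
    have "2 \<le> card (roots_of_unity G 2)"
      using card_roots_of_unity_ge[OF fin] assms(2) by (meson dvd_mult_left)
    moreover have "card (roots_of_unity G 2) \<le> 1" if "roots_of_unity G 2 \<subseteq> {\<one>}"
      using card_mono[OF _ that] by simp
    ultimately obtain z where z: "z \<in> roots_of_unity G 2" "z \<noteq> \<one>"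
      by fastforce
    then have "z \<in> roots_of_unity G (2 * e)"
      using roots_of_unity_mono[of 2 "2 * e"] by auto
    then have "z [^] e = \<one>" "z [^] (2::nat) = \<one>" "z \<in> carrier G"
      using same z(1) by (auto simp: roots_of_unity_def)
    then show False
      using eq_one_if_coprime_exponents[of z e 2] \<open>odd e\<close> z(2) by simp
  qed
  ultimately have "k = 1"
    using \<open>e > 0\<close> by simp
  then show ?thesis
    using k by simp
qed

lemma exists_card_roots_of_unity_gt_if_not_cyclic:
  assumes fin: "finite (carrier G)" and "\<not> cyclic_group G"
  shows "\<exists>e. e dvd order G \<and> (odd (order G) \<or> even e) \<and> e < card (roots_of_unity G e)"
proof (rule ccontr)
  assume none: "\<not> ?thesis"
  have eq: "card (roots_of_unity G e) = e" if "e dvd order G" "odd (order G) \<or> even e" for e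
  proof -
    have "\<not> e < card (roots_of_unity G e)"
      using none that by blast
    then show ?thesis
      using card_roots_of_unity_ge[OF fin that(1)] by simp
  qed
  have "card (roots_of_unity G e) = e" if e: "e dvd order G" for e
  proof (cases "odd (order G) \<or> even e")
    case True
    then show ?thesis
      using eq[OF e] by simp
  next
    case False
    then have "coprime 2 e"
      using odd_imp_coprime_nat[of e] by (simp add: coprime_commute)
    then have "2 * e dvd order G"
      using False e by (simp add: divides_mult)
    moreover have "card (roots_of_unity G (2 * e)) = 2 * e"
      using eq[OF calculation] by simp
    ultimately show ?thesis
      using card_roots_of_unity_odd_eq[OF fin] False by simp
  qed
  then show False
    using cyclic_if_card_roots_of_unity_eq[OF fin] assms(2) by blast
qed

end

section \<open>Weights on the divisor lattice\<close>

lemma totient_prime_power_mono: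
  assumes "prime p"
  shows "totient (p ^ i) \<le> totient (p ^ Suc i)"
    and "0 < i \<or> 2 < p \<Longrightarrow> totient (p ^ i) < totient (p ^ Suc i)"
proof -
  have p: "p \<ge> 2"
    using prime_ge_2_nat[OF assms] .
  have succ: "totient (p ^ Suc i) = p ^ i * (p - 1)"
    by (rule totient_prime_power_Suc[OF assms])
  show "totient (p ^ i) \<le> totient (p ^ Suc i)"
  proof (cases i)
    case 0
    then show ?thesis
      using succ p by simp
  next
    case (Suc k)
    then show ?thesis
      using totient_prime_power_Suc[OF assms, of k] succ p by simp
  qed
  show "totient (p ^ i) < totient (p ^ Suc i)" if "0 < i \<or> 2 < p"
  proof (cases i)
    case 0
    then show ?thesis
      using succ that by simp
  next
    case (Suc k)
    then show ?thesis
      using totient_prime_power_Suc[OF assms, of k] succ p by simp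
  qed
qed

definition prime_power_weight :: "nat \<Rightarrow> nat \<Rightarrow> nat \<Rightarrow> real" where
  "prime_power_weight p b i =
     (if i < b then 1 / totient (p ^ i) - 1 / totient (p ^ Suc i) else 1 / totient (p ^ i))"

lemma prime_power_weight_nonneg:
  assumes "prime p"
  shows "0 \<le> prime_power_weight p b i"
proof -
  have "real (totient (p ^ i)) > 0"
    using assms by (simp add: prime_gt_0_nat)
  then show ?thesis
    using totient_prime_power_mono(1)[OF assms, of i]
    by (simp add: prime_power_weight_def frac_le)
qed

lemma prime_power_weight_pos:
  assumes "prime p" "0 < i \<or> 2 < p"
  shows "0 < prime_power_weight p b i"
proof -
  have "real (totient (p ^ i)) > 0"
    using assms by (simp add: prime_gt_0_nat)
  then show ?thesis
    using totient_prime_power_mono(2)[OF assms]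
    by (simp add: prime_power_weight_def frac_less2)
qed

lemma sum_prime_power_weight:
  "j \<le> b \<Longrightarrow> (\<Sum>i = j..b. prime_power_weight p b i) = 1 / totient (p ^ j)"
proof (induction "b - j" arbitrary: j)
  case 0
  then show ?case
    by (simp add: prime_power_weight_def)
next
  case (Suc k)
  then have "{j..b} = insert j {Suc j..b}" "j < b"
    by auto
  then show ?case
    using Suc by (simp add: prime_power_weight_def)
qed

lemma multiplicity_prime_power_mult:
  fixes p f :: nat
  assumes "prime p" "\<not> p dvd f"
  shows "multiplicity p (p ^ i * f) = i"
  using assms by (intro multiplicity_decomposeI) auto

lemma prime_power_mult_dvd_iff:
  fixes p f d :: nat
  assumes p: "prime p" and "\<not> p dvd f" "f \<noteq> 0" "\<not> p dvd d"
  shows "p ^ j * d dvd p ^ i * f \<longleftrightarrow> j \<le> i \<and> d dvd f"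
proof
  assume dvd: "p ^ j * d dvd p ^ i * f"
  have "p ^ i * f \<noteq> 0"
    using assms(3) p by (simp add: prime_gt_0_nat)
  with dvd have "multiplicity p (p ^ j * d) \<le> multiplicity p (p ^ i * f)"
    by (rule dvd_imp_multiplicity_le)
  then have "j \<le> i"
    using multiplicity_prime_power_mult[OF p] assms(2,4) by simp
  moreover have "d dvd f"
  proof -
    have "coprime d (p ^ i)"
      using prime_imp_coprime[OF p assms(4)] by (simp add: coprime_commute)
    moreover have "d dvd p ^ i * f"
      using dvd by (rule dvd_mult_right)
    ultimately show ?thesis
      by (simp add: coprime_dvd_mult_right_iff)
  qed
  ultimately show "j \<le> i \<and> d dvd f" ..
next
  assume "j \<le> i \<and> d dvd f"
  then show "p ^ j * d dvd p ^ i * f"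
    using mult_dvd_mono le_imp_power_dvd by blast
qed

lemma divisor_prime_power_mult_decompose:
  fixes p m e :: nat
  assumes p: "prime p" and "\<not> p dvd m" "m > 0" and e: "e dvd p ^ b * m"
  obtains i f where "i \<le> b" "f dvd m" "e = p ^ i * f"
proof -
  have "p ^ b * m \<noteq> 0"
    using assms(3) p by (simp add: prime_gt_0_nat)
  have "e \<noteq> 0"
  proof
    assume "e = 0"
    then show False
      using e \<open>p ^ b * m \<noteq> 0\<close> by simp
  qed
  define i where "i = multiplicity p e"
  define f where "f = e div p ^ i"
  have ef: "e = p ^ i * f"
    unfolding f_def i_def by (simp add: multiplicity_dvd)
  have pf: "\<not> p dvd f"
    unfolding f_def i_def using multiplicity_decompose[OF \<open>e \<noteq> 0\<close>] p not_prime_unit by blast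
  have "m \<noteq> 0"
    using assms(3) by simp
  have "p ^ i * f dvd p ^ b * m"
    using e ef by simp
  then have "i \<le> b \<and> f dvd m"
    using prime_power_mult_dvd_iff[OF p assms(2) \<open>m \<noteq> 0\<close> pf] by blast
  then show ?thesis
    using that ef by blast
qed

lemma divisors_prime_power_mult:
  fixes p m d :: nat
  assumes p: "prime p" and pm: "\<not> p dvd m" and "m > 0" "j \<le> b" "d dvd m"
  shows "{e. e dvd p ^ b * m \<and> p ^ j * d dvd e} = (\<lambda>(i, f). p ^ i * f) ` ({j..b} \<times> {f. f dvd m \<and> d dvd f})"
proof -
  have nondvd: "\<not> p dvd f" "f \<noteq> 0" if "f dvd m" for f
    using that pm assms(3) dvd_trans[of p f m] by auto
  show ?thesis
  proof (intro equalityI subsetI)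
    fix e assume "e \<in> {e. e dvd p ^ b * m \<and> p ^ j * d dvd e}"
    then have e: "e dvd p ^ b * m" "p ^ j * d dvd e"
      by auto
    obtain i f where i: "i \<le> b" "f dvd m" "e = p ^ i * f"
      using divisor_prime_power_mult_decompose[OF p pm assms(3) e(1)] .
    then have "j \<le> i \<and> d dvd f"
      using e(2) prime_power_mult_dvd_iff[OF p nondvd[OF i(2)] nondvd(1)[OF assms(5)]] by simp
    then show "e \<in> (\<lambda>(i, f). p ^ i * f) ` ({j..b} \<times> {f. f dvd m \<and> d dvd f})"
      using i by (intro image_eqI[of _ _ "(i, f)"]) auto
  next
    fix e assume "e \<in> (\<lambda>(i, f). p ^ i * f) ` ({j..b} \<times> {f. f dvd m \<and> d dvd f})"
    then obtain i f where i: "j \<le> i" "i \<le> b" "f dvd m" "d dvd f" "e = p ^ i * f"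
      by auto
    have "e dvd p ^ b * m"
      using mult_dvd_mono[OF le_imp_power_dvd[OF i(2)] i(3)] i(5) by simp
    moreover have "p ^ j * d dvd e"
      using mult_dvd_mono[OF le_imp_power_dvd[OF i(1)] i(4)] i(5) by simp
    ultimately show "e \<in> {e. e dvd p ^ b * m \<and> p ^ j * d dvd e}"
      by simp
  qed
qed

lemma inj_on_prime_power_mult:
  fixes p m :: nat
  assumes p: "prime p" and "\<not> p dvd m" "m > 0"
  shows "inj_on (\<lambda>(i, f). p ^ i * f) (A \<times> {f. f dvd m})"
proof (rule inj_onI, clarify)
  fix i f i' f' assume "f dvd m" "f' dvd m" and eq: "p ^ i * f = p ^ i' * f'"
  then have "\<not> p dvd f" "\<not> p dvd f'"
    using assms(2) dvd_trans[of p f m] dvd_trans[of p f' m] by auto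
  then have "i = i'"
    using eq multiplicity_prime_power_mult[OF p, of f i] multiplicity_prime_power_mult[OF p, of f' i']
    by simp
  then show "i = i' \<and> f = f'"
    using eq p by (simp add: prime_gt_0_nat)
qed

text \<open>The weights are the Moebius inversion of \<open>1/\<phi>\<close> on the divisors of \<open>n\<close>; they are built one
  prime at a time, the factor belonging to \<open>p\<^sup>b\<close> being \<open>prime_power_weight p b\<close>.\<close>
definition divisor_weights :: "nat \<Rightarrow> (nat \<Rightarrow> real) \<Rightarrow> bool" where
  "divisor_weights n W \<longleftrightarrow>
     (\<forall>e. 0 \<le> W e) \<and> (\<forall>d. d dvd n \<longrightarrow> (\<Sum>e | e dvd n \<and> d dvd e. W e) = 1 / totient d)"

lemma divisor_weights_one: "divisor_weights 1 (\<lambda>_. 1)"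
proof -
  have "{e. e dvd 1 \<and> d dvd e} = {1}" if "d dvd 1" for d :: nat
    using that by auto
  then show ?thesis
    by (simp add: divisor_weights_def)
qed

definition extend_divisor_weights :: "nat \<Rightarrow> nat \<Rightarrow> (nat \<Rightarrow> real) \<Rightarrow> nat \<Rightarrow> real" where
  "extend_divisor_weights p b W e = prime_power_weight p b (multiplicity p e) * W (e div p ^ multiplicity p e)"

lemma extend_divisor_weights_prime_power_mult:
  fixes p f :: nat
  assumes "prime p" "\<not> p dvd f"
  shows "extend_divisor_weights p b W (p ^ i * f) = prime_power_weight p b i * W f"
  using assms by (simp add: extend_divisor_weights_def multiplicity_prime_power_mult prime_gt_0_nat)

lemma divisor_weights_prime_power_mult:
  fixes p m b :: nat
  assumes p: "prime p" and pm: "\<not> p dvd m" and "m > 0" and W: "divisor_weights m W"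
  shows "divisor_weights (p ^ b * m) (extend_divisor_weights p b W)"
proof -
  let ?W = "extend_divisor_weights p b W"
  have W_mult: "?W (p ^ i * f) = prime_power_weight p b i * W f" if "f dvd m" for i f
    using extend_divisor_weights_prime_power_mult[OF p] that pm dvd_trans[of p f m] by blast
  have "(\<Sum>e | e dvd p ^ b * m \<and> d dvd e. ?W e) = 1 / totient d" if d: "d dvd p ^ b * m" for d
  proof -
    obtain j d' where j: "j \<le> b" "d' dvd m" "d = p ^ j * d'"
      using divisor_prime_power_mult_decompose[OF p pm \<open>m > 0\<close> d] .
    let ?A = "{j..b} \<times> {f. f dvd m \<and> d' dvd f}"
    have inj: "inj_on (\<lambda>(i, f). p ^ i * f) ?A"
      using inj_on_prime_power_mult[OF p pm \<open>m > 0\<close>, of "{j..b}"] by (rule inj_on_subset) auto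
    have "(\<Sum>e | e dvd p ^ b * m \<and> d dvd e. ?W e) = (\<Sum>(i, f) \<in> ?A. ?W (p ^ i * f))"
      unfolding j(3) divisors_prime_power_mult[OF p pm \<open>m > 0\<close> j(1,2)]
      using sum.reindex[OF inj, of ?W] by (simp add: case_prod_unfold)
    also have "\<dots> = (\<Sum>(i, f) \<in> ?A. prime_power_weight p b i * W f)"
      using W_mult by (intro sum.cong) auto
    also have "\<dots> = (\<Sum>i = j..b. prime_power_weight p b i) * (\<Sum>f | f dvd m \<and> d' dvd f. W f)"
      by (simp add: sum_product sum.cartesian_product)
    also have "\<dots> = 1 / totient (p ^ j) * (1 / totient d')"
      using sum_prime_power_weight[OF j(1)] W j(2) by (simp add: divisor_weights_def)
    also have "\<dots> = 1 / totient d"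
    proof -
      have "coprime (p ^ j) d'"
        using prime_imp_coprime[OF p] pm j(2) dvd_trans[of p d' m] by auto
      then show ?thesis
        using j(3) by (simp add: totient_mult_coprime)
    qed
    finally show ?thesis .
  qed
  moreover have "0 \<le> ?W e" for e
    using prime_power_weight_nonneg[OF p] W by (simp add: extend_divisor_weights_def divisor_weights_def)
  ultimately show ?thesis
    by (simp add: divisor_weights_def)
qed

lemma prime_power_split:
  fixes n :: nat
  assumes "n > 1"
  obtains p b m where "prime p" "b > 0" "\<not> p dvd m" "m > 0" "n = p ^ b * m" "even n \<Longrightarrow> p = 2"
proof -
  obtain p where p: "prime p" "p dvd n" and p2: "even n \<Longrightarrow> p = 2"
  proof (cases "even n")
    case True
    then show ?thesis
      using that[of 2] by simp
  next
    case False
    obtain p where "prime p" "p dvd n"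
      using prime_factor_nat assms by (metis less_irrefl)
    then show ?thesis
      using that False by blast
  qed
  define b where "b = multiplicity p n"
  define m where "m = n div p ^ b"
  have "n = p ^ b * m"
    unfolding m_def b_def by (simp add: multiplicity_dvd)
  moreover have "\<not> p dvd m"
    unfolding m_def b_def by (rule multiplicity_decompose) (use assms p(1) not_prime_unit in auto)
  moreover have "m > 0"
    using \<open>n = p ^ b * m\<close> assms by (auto intro: gr0I)
  moreover have "b > 0"
    unfolding b_def using prime_multiplicity_gt_zero_iff[OF prime_imp_prime_elem[OF p(1)]] p(2) assms
    by simp
  ultimately show ?thesis
    using that[of p b m] p(1) p2 by blast
qed

text \<open>Since \<open>\<phi>(1) = \<phi>(2)\<close>, the weight of an odd divisor vanishes when \<open>n\<close> is even; splitting off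
  the prime 2 first in that case leaves an odd cofactor, all of whose weights are positive.\<close>
lemma ex_divisor_weights:
  fixes n :: nat
  assumes "n > 0"
  shows "\<exists>W. divisor_weights n W \<and> (\<forall>e. e dvd n \<longrightarrow> odd n \<or> even e \<longrightarrow> 0 < W e)"
  using assms
proof (induction n rule: less_induct)
  case (less n)
  show ?case
  proof (cases "n = 1")
    case True
    then show ?thesis
      using divisor_weights_one by auto
  next
    case False
    then have "n > 1"
      using less.prems by simp
    then obtain p b m where p: "prime p" and "b > 0" and pm: "\<not> p dvd m" and "m > 0"
      and n: "n = p ^ b * m" and p2: "even n \<Longrightarrow> p = 2"
      using prime_power_split by blast
    have "p ^ b > 1"
      using one_less_power[OF prime_gt_1_nat[OF p] \<open>b > 0\<close>] .
    then have "m < n"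
      using n \<open>m > 0\<close> by simp
    have "p dvd n"
      unfolding n using \<open>b > 0\<close> by (cases b) auto
    have "odd m"
      using n pm p2 by (cases "even n") auto
    obtain W where W: "divisor_weights m W" "\<And>f. f dvd m \<Longrightarrow> 0 < W f"
      using less.IH[OF \<open>m < n\<close> \<open>m > 0\<close>] \<open>odd m\<close> by blast
    have "divisor_weights n (extend_divisor_weights p b W)"
      unfolding n by (rule divisor_weights_prime_power_mult[OF p pm \<open>m > 0\<close> W(1)])
    moreover have "0 < extend_divisor_weights p b W e" if e: "e dvd n" "odd n \<or> even e" for e
    proof -
      obtain i f where i: "i \<le> b" "f dvd m" "e = p ^ i * f"
        using divisor_prime_power_mult_decompose[OF p pm \<open>m > 0\<close>] e(1) n by metis
      have "\<not> p dvd f" "odd f"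
        using i(2) pm \<open>odd m\<close> dvd_trans[of p f m] dvd_trans[of 2 f m] by auto
      have "odd n \<Longrightarrow> 2 < p"
        using \<open>p dvd n\<close> prime_ge_2_nat[OF p] by (cases "p = 2") auto
      then have "0 < i \<or> 2 < p"
        using e(2) i(3) \<open>odd f\<close> by (cases i) auto
      then show ?thesis
        using prime_power_weight_pos[OF p] W(2)[OF i(2)]
        by (simp add: i(3) extend_divisor_weights_prime_power_mult[OF p \<open>\<not> p dvd f\<close>])
    qed
    ultimately show ?thesis
      by blast
  qed
qed

lemma divisor_weights_sum_mult:
  fixes W :: "nat \<Rightarrow> real"
  assumes "n > 0" "divisor_weights n W"
  shows "(\<Sum>e | e dvd n. W e * e) = num_divisors n"
proof -
  let ?D = "{e. e dvd n}"
  have fin: "finite ?D"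
    using assms(1) by simp
  have "(\<Sum>e\<in>?D. W e * e) = (\<Sum>e\<in>?D. \<Sum>d | d \<in> ?D \<and> d dvd e. W e * totient d)"
  proof (rule sum.cong[OF refl])
    fix e assume e: "e \<in> ?D"
    have "{d. d \<in> ?D \<and> d dvd e} = {d. d dvd e}"
      using e by (auto intro: dvd_trans)
    moreover have "real e = (\<Sum>d | d dvd e. real (totient d))"
      using totient_divisor_sum[of e] by (metis of_nat_sum)
    ultimately show "W e * e = (\<Sum>d | d \<in> ?D \<and> d dvd e. W e * totient d)"
      by (simp add: sum_distrib_left)
  qed
  also have "\<dots> = (\<Sum>d\<in>?D. \<Sum>e | e \<in> ?D \<and> d dvd e. W e * totient d)"
    by (rule sum.swap_restrict[OF fin fin])
  also have "\<dots> = (\<Sum>d\<in>?D. 1)"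
  proof (rule sum.cong[OF refl])
    fix d assume d: "d \<in> ?D"
    then have "d > 0"
      using assms(1) by (auto intro: gr0I)
    have "(\<Sum>e | e \<in> ?D \<and> d dvd e. W e * totient d) = (\<Sum>e | e \<in> ?D \<and> d dvd e. W e) * totient d"
      by (simp add: sum_distrib_right)
    also have "\<dots> = 1"
      using assms(2) d \<open>d > 0\<close> by (simp add: divisor_weights_def)
    finally show "(\<Sum>e | e \<in> ?D \<and> d dvd e. W e * totient d) = 1" .
  qed
  finally show ?thesis
    by (simp add: num_divisors_def)
qed

lemma divisor_weights_sum_inverse_totient:
  fixes f :: "'a \<Rightarrow> nat" and W :: "nat \<Rightarrow> real"
  assumes "n > 0" "divisor_weights n W" "finite X" "\<And>x. x \<in> X \<Longrightarrow> f x dvd n"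
  shows "(\<Sum>x\<in>X. 1 / totient (f x)) = (\<Sum>e | e dvd n. W e * card {x \<in> X. f x dvd e})"
proof -
  let ?D = "{e. e dvd n}"
  have fin: "finite ?D"
    using assms(1) by simp
  have "(\<Sum>e\<in>?D. W e * card {x \<in> X. f x dvd e}) = (\<Sum>e\<in>?D. \<Sum>x | x \<in> X \<and> f x dvd e. W e)"
    by (simp add: mult.commute)
  also have "\<dots> = (\<Sum>x\<in>X. \<Sum>e | e \<in> ?D \<and> f x dvd e. W e)"
    by (rule sum.swap_restrict[OF fin assms(3)])
  also have "\<dots> = (\<Sum>x\<in>X. 1 / totient (f x))"
    using assms(2,4) by (simp add: divisor_weights_def)
  finally show ?thesis
    by simp
qed

section \<open>Counting cyclic subgroups\<close>

context group
begin

lemma card_cyclic_subgroups_eq_weighted_sum: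
  fixes W :: "nat \<Rightarrow> real"
  assumes fin: "finite (carrier G)" and W: "divisor_weights (order G) W"
  shows "card (cyclic_subgroups G) = (\<Sum>e | e dvd order G. W e * card (roots_of_unity G e))"
proof -
  have "order G > 0"
    using fin order_gt_0_iff_finite by simp
  then show ?thesis
    using card_cyclic_subgroups_eq_sum[OF fin]
      divisor_weights_sum_inverse_totient[OF _ W fin ord_dvd_group_order]
    by (simp add: roots_of_unity_eq_ord_dvd)
qed

lemma weighted_sum_roots_of_unity_ge:
  fixes W :: "nat \<Rightarrow> real"
  assumes fin: "finite (carrier G)" and W: "divisor_weights (order G) W"
    and W_pos: "\<And>e. e dvd order G \<Longrightarrow> odd (order G) \<or> even e \<Longrightarrow> 0 < W e"
  shows "(\<Sum>e | e dvd order G. W e * e) \<le> (\<Sum>e | e dvd order G. W e * card (roots_of_unity G e))"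
    and "(\<Sum>e | e dvd order G. W e * e) = (\<Sum>e | e dvd order G. W e * card (roots_of_unity G e))
           \<longleftrightarrow> cyclic_group G"
proof -
  let ?D = "{e. e dvd order G}" and ?L = "\<lambda>e. real (card (roots_of_unity G e))"
  have termwise: "W e * e \<le> W e * ?L e" if "e \<in> ?D" for e
    using W card_roots_of_unity_ge[OF fin] that by (simp add: divisor_weights_def mult_left_mono)
  then show le: "(\<Sum>e\<in>?D. W e * e) \<le> (\<Sum>e\<in>?D. W e * ?L e)"
    by (rule sum_mono)
  have "(\<Sum>e\<in>?D. W e * e) < (\<Sum>e\<in>?D. W e * ?L e)" if noncyclic: "\<not> cyclic_group G"
  proof -
    obtain e where e: "e dvd order G" "odd (order G) \<or> even e" "e < card (roots_of_unity G e)"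
      using exists_card_roots_of_unity_gt_if_not_cyclic[OF fin noncyclic] by blast
    then have "W e * e < W e * ?L e"
      using W_pos by simp
    moreover have "finite ?D"
      using fin order_gt_0_iff_finite by simp
    ultimately show ?thesis
      using termwise e(1) by (intro sum_strict_mono_ex1) auto
  qed
  moreover have "(\<Sum>e\<in>?D. W e * e) = (\<Sum>e\<in>?D. W e * ?L e)" if "cyclic_group G"
    using cyclic_card_roots_of_unity[OF fin that] by simp
  ultimately show "(\<Sum>e\<in>?D. W e * e) = (\<Sum>e\<in>?D. W e * ?L e) \<longleftrightarrow> cyclic_group G"
    by force
qed

end

theorem theorem1p2:
  fixes G :: "('a, 'b) monoid_scheme"
  assumes "group G" and "finite (carrier G)"
  shows "card (cyclic_subgroups G) \<ge> num_divisors (order G) \<and>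
         (card (cyclic_subgroups G) = num_divisors (order G) \<longleftrightarrow> cyclic_group G)"
proof -
  interpret group G by (rule assms(1))
  have n: "order G > 0"
    using assms(2) order_gt_0_iff_finite by simp
  obtain W where W: "divisor_weights (order G) W"
    and W_pos: "\<And>e. e dvd order G \<Longrightarrow> odd (order G) \<or> even e \<Longrightarrow> 0 < W e"
    using ex_divisor_weights[OF n] by blast
  have "real (card (cyclic_subgroups G)) = (\<Sum>e | e dvd order G. W e * card (roots_of_unity G e))"
    using card_cyclic_subgroups_eq_weighted_sum[OF assms(2) W] .
  moreover have "real (num_divisors (order G)) = (\<Sum>e | e dvd order G. W e * e)"
    using divisor_weights_sum_mult[OF n W] by simp
  ultimately show ?thesis
    using weighted_sum_roots_of_unity_ge[OF assms(2) W W_pos] by (metis of_nat_eq_iff of_nat_le_iff)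
qed

end
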